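(* Every completely metrizable space that is almost arcwise connected and locally almost arcwise connected is arcwise connected and locally arcwise connected.
   Context: Two sets $A,B$ are joined by an arc in a set $S$ if there is a continuous $\gamma:[0,1]\to X$ with $\gamma([0,1])\subseteq S$, $\gamma(0)\in A$, $\gamma(1)\in B$. $X$ is almost arcwise connected if each pair of nonempty open subsets of $X$ can be joined by an arc in $X$. $X$ is locally almost arcwise connected at $x$ if for every neighborhood $V$ of $x$ there is a neighborhood $U\subseteq V$ of $x$ such that each pair of nonempty open subsets of $U$ can be joined by an arc in $\overline V$; locally almost arcwise connected means this holds at every point. *)

theory Defs
  imports "HOL-Analysis.Analysis"
begin

definition joined_by_arc_in :: "'a topology \<Rightarrow> 'a set \<Rightarrow> 'a set \<Rightarrow> 'a set \<Rightarrow> bool" where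
  "joined_by_arc_in X S A B \<longleftrightarrow>
     (\<exists>g. pathin X g \<and> g ` {0..1} \<subseteq> S \<and> g 0 \<in> A \<and> g 1 \<in> B)"

definition almost_arcwise_connected :: "'a topology \<Rightarrow> bool" where
  "almost_arcwise_connected X \<longleftrightarrow>
     (\<forall>A B. openin X A \<and> A \<noteq> {} \<and> openin X B \<and> B \<noteq> {} \<longrightarrow>
            joined_by_arc_in X (topspace X) A B)"

definition nbhd_of :: "'a topology \<Rightarrow> 'a \<Rightarrow> 'a set \<Rightarrow> bool" where
  "nbhd_of X x N \<longleftrightarrow> N \<subseteq> topspace X \<and> (\<exists>W. openin X W \<and> x \<in> W \<and> W \<subseteq> N)"

definition locally_almost_arcwise_connected_at :: "'a topology \<Rightarrow> 'a \<Rightarrow> bool" where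
  "locally_almost_arcwise_connected_at X x \<longleftrightarrow>
     (\<forall>V. nbhd_of X x V \<longrightarrow>
        (\<exists>U. nbhd_of X x U \<and> U \<subseteq> V \<and>
           (\<forall>A B. openin (subtopology X U) A \<and> A \<noteq> {} \<and>
                  openin (subtopology X U) B \<and> B \<noteq> {} \<longrightarrow>
                  joined_by_arc_in X (X closure_of V) A B)))"

definition locally_almost_arcwise_connected :: "'a topology \<Rightarrow> bool" where
  "locally_almost_arcwise_connected X \<longleftrightarrow>
     (\<forall>x \<in> topspace X. locally_almost_arcwise_connected_at X x)"

end

theory Submission
  imports Defs
begin

text \<open>Work in a complete metric. Local almost arcwise connectedness gives, around every centre
  \<open>c\<close> and at every scale \<open>e\<close>, a radius \<open>\<delta> c e\<close> such that any two nonempty open sets in the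
  \<open>\<delta>\<close>-ball are joined by a path inside the \<open>e\<close>-ball. To join \<open>x\<close> to a point \<open>y\<close> close to it,
  join small balls around \<open>x\<close> and \<open>y\<close> by such a path; this leaves two gaps, at its ends, which
  are again small and are bridged in the same way at half the scale, and so on. Parametrising
  the bridges on the middle thirds of the remaining intervals, the successive approximations
  converge uniformly, and since their local oscillation tends to zero the limit is a path from
  \<open>x\<close> to \<open>y\<close> that stays close to \<open>x\<close>. Hence the space is locally path connected, so its path
  components are open, and almost arcwise connectedness forces there to be only one.\<close>

definition local_oscillation_less :: "('a \<Rightarrow> 'a \<Rightarrow> real) \<Rightarrow> real set \<Rightarrow> (real \<Rightarrow> 'a) \<Rightarrow> real \<Rightarrow> bool" where
  "local_oscillation_less d S f e \<longleftrightarrow> (\<forall>t\<in>S. \<exists>\<rho>>0. \<forall>s\<in>S. \<bar>s - t\<bar> < \<rho> \<longrightarrow> d (f s) (f t) < e)"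

lemma local_oscillation_less_cong:
  "(\<And>s. s \<in> S \<Longrightarrow> f s = g s) \<Longrightarrow> local_oscillation_less d S f e = local_oscillation_less d S g e"
  unfolding local_oscillation_less_def by auto

lemma local_oscillation_less_mono:
  "local_oscillation_less d S f e \<Longrightarrow> e \<le> e' \<Longrightarrow> local_oscillation_less d S f e'"
  unfolding local_oscillation_less_def by (meson less_le_trans)

lemma local_oscillation_less_join:
  assumes left: "local_oscillation_less d {lo..a} f e" and right: "local_oscillation_less d {a..hi} f e"
  shows "local_oscillation_less d {lo..hi} f e"
  unfolding local_oscillation_less_def
proof
  fix t assume t: "t \<in> {lo..hi}"
  obtain \<rho>1 where "\<rho>1 > 0" and \<rho>1: "t \<le> a \<Longrightarrow> \<forall>s\<in>{lo..a}. \<bar>s - t\<bar> < \<rho>1 \<longrightarrow> d (f s) (f t) < e"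
  proof (cases "t \<le> a")
    case True
    then show ?thesis using left t that unfolding local_oscillation_less_def by (meson atLeastAtMost_iff)
  qed (use that[of 1] in simp)
  obtain \<rho>2 where "\<rho>2 > 0" and \<rho>2: "a \<le> t \<Longrightarrow> \<forall>s\<in>{a..hi}. \<bar>s - t\<bar> < \<rho>2 \<longrightarrow> d (f s) (f t) < e"
  proof (cases "a \<le> t")
    case True
    then show ?thesis using right t that unfolding local_oscillation_less_def by (meson atLeastAtMost_iff)
  qed (use that[of 1] in simp)
  \<comment> \<open>away from the junction point only one side counts, so shrink the radius to stay on it\<close>
  define \<rho> where "\<rho> = (if t < a then min \<rho>1 (a - t) else if a < t then min \<rho>2 (t - a) else min \<rho>1 \<rho>2)"
  have "\<rho> > 0" using \<open>\<rho>1 > 0\<close> \<open>\<rho>2 > 0\<close> by (simp add: \<rho>_def)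
  moreover have "d (f s) (f t) < e" if "s \<in> {lo..hi}" "\<bar>s - t\<bar> < \<rho>" for s
    using that t \<rho>1 \<rho>2 by (cases "s \<le> a"; auto simp: \<rho>_def split: if_splits)
  ultimately show "\<exists>\<rho>>0. \<forall>s\<in>{lo..hi}. \<bar>s - t\<bar> < \<rho> \<longrightarrow> d (f s) (f t) < e"
    by blast
qed

lemma local_oscillation_less_rescale:
  assumes "local_oscillation_less d {0..1} h e" "c > 0"
  shows "local_oscillation_less d {b/c..(b+1)/c} (\<lambda>s. h (c * s - b)) e"
  unfolding local_oscillation_less_def
proof
  fix t assume t: "t \<in> {b/c..(b+1)/c}"
  have "c * t - b \<in> {0..1}" using t \<open>c > 0\<close> by (auto simp: field_simps)
  then obtain \<rho> where "\<rho> > 0" and \<rho>: "\<forall>s\<in>{0..1}. \<bar>s - (c * t - b)\<bar> < \<rho> \<longrightarrow> d (h s) (h (c * t - b)) < e"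
    using assms(1) unfolding local_oscillation_less_def by blast
  have "d (h (c * s - b)) (h (c * t - b)) < e" if s: "s \<in> {b/c..(b+1)/c}" "\<bar>s - t\<bar> < \<rho>/c" for s
  proof -
    have "c * s - b \<in> {0..1}" using s \<open>c > 0\<close> by (auto simp: field_simps)
    moreover have "\<bar>(c * s - b) - (c * t - b)\<bar> = c * \<bar>s - t\<bar>"
      using \<open>c > 0\<close> by (simp add: abs_mult flip: right_diff_distrib)
    moreover have "c * \<bar>s - t\<bar> < \<rho>" using s \<open>c > 0\<close> by (simp add: field_simps)
    ultimately show ?thesis using \<rho> by auto
  qed
  then show "\<exists>\<rho>>0. \<forall>s\<in>{b/c..(b+1)/c}. \<bar>s - t\<bar> < \<rho> \<longrightarrow> d (h (c * s - b)) (h (c * t - b)) < e"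
    using \<open>\<rho> > 0\<close> \<open>c > 0\<close> by (intro exI[of _ "\<rho>/c"]) auto
qed

context Metric_space
begin

lemma pathin_in_mspace: "pathin mtopology g \<Longrightarrow> t \<in> {0..1} \<Longrightarrow> g t \<in> M"
  using path_image_subset_topspace by fastforce

lemma pathin_local_oscillation_less:
  assumes g: "pathin mtopology g" and e: "e > 0"
  shows "local_oscillation_less d {0..1} g e"
  unfolding local_oscillation_less_def
proof
  fix t :: real assume t: "t \<in> {0..1}"
  obtain U where U: "openin (top_of_set {0..1}) U" "t \<in> U" and gU: "\<forall>s\<in>U. g s \<in> mball (g t) e"
    using g t e unfolding pathin_def continuous_map_to_metric topspace_euclidean_subtopology by blast
  obtain \<rho> where "\<rho> > 0" and \<rho>: "\<forall>s\<in>{0..1}. \<bar>s - t\<bar> < \<rho> \<longrightarrow> s \<in> U"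
    using U unfolding openin_contains_ball by (force simp: dist_real_def abs_minus_commute)
  show "\<exists>\<rho>>0. \<forall>s\<in>{0..1}. \<bar>s - t\<bar> < \<rho> \<longrightarrow> d (g s) (g t) < e"
    using \<open>\<rho> > 0\<close> \<rho> gU commute by fastforce
qed

text \<open>The uniform limit theorem for approximants that need not be continuous, only of
  small local oscillation.\<close>
lemma continuous_map_uniform_limit_oscillation:
  assumes gM: "g ` S \<subseteq> M"
    and approx: "\<And>\<epsilon>. \<epsilon> > 0 \<Longrightarrow> \<exists>h. local_oscillation_less d S h \<epsilon> \<and> (\<forall>t\<in>S. h t \<in> M \<and> d (h t) (g t) < \<epsilon>)"
  shows "continuous_map (top_of_set S) mtopology g"
  unfolding continuous_map_to_metric
proof (intro ballI allI impI)
  fix t \<epsilon> :: real assume t: "t \<in> topspace (top_of_set S)" and "\<epsilon> > 0"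
  then have "t \<in> S" by simp
  obtain h where osc: "local_oscillation_less d S h (\<epsilon>/3)" and h: "\<forall>s\<in>S. h s \<in> M \<and> d (h s) (g s) < \<epsilon>/3"
    using approx[of "\<epsilon>/3"] \<open>\<epsilon> > 0\<close> by auto
  obtain \<rho> where "\<rho> > 0" and \<rho>: "\<forall>s\<in>S. \<bar>s - t\<bar> < \<rho> \<longrightarrow> d (h s) (h t) < \<epsilon>/3"
    using osc \<open>t \<in> S\<close> unfolding local_oscillation_less_def by blast
  have "g s \<in> mball (g t) \<epsilon>" if "s \<in> S \<inter> ball t \<rho>" for s
  proof -
    have s: "s \<in> S" "\<bar>s - t\<bar> < \<rho>" using that by (auto simp: dist_real_def abs_minus_commute)
    have gts: "g t \<in> M" "g s \<in> M" using gM s \<open>t \<in> S\<close> by auto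
    have "d (g t) (g s) \<le> d (g t) (h t) + d (h t) (h s) + d (h s) (g s)"
      using triangle[OF gts(1) _ gts(2)] triangle[of "h t" "h s" "g s"] h s \<open>t \<in> S\<close> gts
      by (smt (verit))
    moreover have "d (g t) (h t) < \<epsilon>/3" "d (h t) (h s) < \<epsilon>/3" "d (h s) (g s) < \<epsilon>/3"
      using h \<rho> s \<open>t \<in> S\<close> gM commute by (auto simp: image_subset_iff)
    ultimately show ?thesis using gM s \<open>t \<in> S\<close> by auto
  qed
  then show "\<exists>U. openin (top_of_set S) U \<and> t \<in> U \<and> (\<forall>s\<in>U. g s \<in> mball (g t) \<epsilon>)"
    using \<open>\<rho> > 0\<close> \<open>t \<in> S\<close> by (intro exI[of _ "S \<inter> ball t \<rho>"]) auto
qed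

lemma limitin_mdist_le:
  assumes "limitin mtopology \<sigma> l sequentially" "a \<in> M" "\<forall>\<^sub>F n in sequentially. d a (\<sigma> n) \<le> r"
  shows "d a l \<le> r"
proof -
  have "\<forall>\<^sub>F n in sequentially. \<sigma> n \<in> M"
    using assms(1) unfolding limitin_metric by (auto dest!: spec[of _ 1] elim: eventually_mono)
  with assms(3) have "\<forall>\<^sub>F n in sequentially. \<sigma> n \<in> mcball a r"
    by eventually_elim (use \<open>a \<in> M\<close> in simp)
  then have "l \<in> mcball a r"
    using limitin_closedin[OF assms(1) closedin_mcball] trivial_limit_sequentially by blast
  then show ?thesis by simp
qed

end

lemma exists_halving_less: "c > 0 \<Longrightarrow> \<exists>n. a / 2 ^ n < (c::real)"
  using real_arch_pow[of 2 "a / c"] by (auto simp: field_simps)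

text \<open>Stage \<open>n\<close> of the construction of a path from \<open>u\<close> to \<open>v\<close>: the middle third
  runs along the bridging path \<open>G k u v\<close>, and the two gaps it leaves at its ends are
  filled recursively at the next scale \<open>Suc k\<close>; at stage 0 a gap is simply a jump.\<close>
primrec fill_gaps :: "(nat \<Rightarrow> 'a \<Rightarrow> 'a \<Rightarrow> real \<Rightarrow> 'a) \<Rightarrow> nat \<Rightarrow> nat \<Rightarrow> 'a \<Rightarrow> 'a \<Rightarrow> real \<Rightarrow> 'a" where
  "fill_gaps G 0 k u v t = (if t < 1/2 then u else v)"
| "fill_gaps G (Suc n) k u v t =
     (if t \<le> 1/3 then fill_gaps G n (Suc k) u (G k u v 0) (3 * t)
      else if t \<le> 2/3 then G k u v (3 * t - 1)
      else fill_gaps G n (Suc k) (G k u v 1) v (3 * t - 2))"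

lemma fill_gaps_0 [simp]: "fill_gaps G n k u v 0 = u"
  by (induction n arbitrary: k u v) auto

lemma fill_gaps_1 [simp]: "fill_gaps G n k u v 1 = v"
  by (induction n arbitrary: k u v) auto

lemma fill_gaps_Suc_middle:
  "t \<in> {1/3..2/3} \<Longrightarrow> fill_gaps G (Suc n) k u v t = G k u v (3 * t - 1)"
proof (cases "t = 1/3")
  case True
  then have "3 * t = 1" by simp
  then show ?thesis by simp
qed auto

lemma fill_gaps_Suc_right:
  "t \<in> {2/3..1} \<Longrightarrow> fill_gaps G (Suc n) k u v t = fill_gaps G n (Suc k) (G k u v 1) v (3 * t - 2)"
proof (cases "t = 2/3")
  case True
  then have "3 * t = 2" by simp
  then show ?thesis by simp
qed auto

text \<open>\<open>admissible k u v\<close> says that the gap from \<open>u\<close> to \<open>v\<close> is small at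
  scale \<open>e0 / 2 ^ k\<close>; the bridge \<open>G k u v\<close> stays within twice that scale of both
  endpoints and leaves only admissible gaps at the next scale.\<close>
locale gap_filling = Metric_space M d for M :: "'a set" and d +
  fixes admissible :: "nat \<Rightarrow> 'a \<Rightarrow> 'a \<Rightarrow> bool"
    and G :: "nat \<Rightarrow> 'a \<Rightarrow> 'a \<Rightarrow> real \<Rightarrow> 'a"
    and e0 :: real
  assumes e0_pos: "e0 > 0"
    and admissible_in_mspace: "admissible k u v \<Longrightarrow> u \<in> M \<and> v \<in> M"
    and admissible_dist: "admissible k u v \<Longrightarrow> d u v < 2 * (e0 / 2 ^ k)"
    and pathin_bridge: "admissible k u v \<Longrightarrow> pathin mtopology (G k u v)"
    and bridge_dist: "admissible k u v \<Longrightarrow> t \<in> {0..1} \<Longrightarrow>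
        d u (G k u v t) < 2 * (e0 / 2 ^ k) \<and> d v (G k u v t) < 2 * (e0 / 2 ^ k)"
    and bridge_admissible: "admissible k u v \<Longrightarrow>
        admissible (Suc k) u (G k u v 0) \<and> admissible (Suc k) (G k u v 1) v"
begin

lemma fill_gaps_in_mspace: "admissible k u v \<Longrightarrow> t \<in> {0..1} \<Longrightarrow> fill_gaps G n k u v t \<in> M"
proof (induction n arbitrary: k u v t)
  case 0
  then show ?case using admissible_in_mspace by auto
next
  case (Suc n)
  note adm = bridge_admissible[OF Suc.prems(1)]
  show ?case
    using Suc.IH[of "Suc k" u "G k u v 0" "3 * t"] Suc.IH[of "Suc k" "G k u v 1" v "3 * t - 2"] adm Suc.prems
      pathin_in_mspace[OF pathin_bridge[OF Suc.prems(1)], of "3 * t - 1"]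
    by auto
qed

lemma fill_gaps_Suc_dist:
  "admissible k u v \<Longrightarrow> t \<in> {0..1} \<Longrightarrow>
     d (fill_gaps G (Suc n) k u v t) (fill_gaps G n k u v t) < 2 * (e0 / 2 ^ (k + n))"
proof (induction n arbitrary: k u v t)
  case 0
  note close = bridge_dist[OF 0(1)]
  have "u \<in> M" "v \<in> M" using admissible_in_mspace[OF 0(1)] by auto
  moreover have "0 < 2 * (e0 / 2 ^ k)" using e0_pos by simp
  moreover have "d (G k u v s) u < 2 * (e0 / 2 ^ k)" "d (G k u v s) v < 2 * (e0 / 2 ^ k)"
    if "s \<in> {0..1}" for s
    using close[OF that] commute by auto
  ultimately show ?case using 0(2) by auto
next
  case (Suc n)
  note adm = bridge_admissible[OF Suc.prems(1)]
  have "0 < 2 * (e0 / 2 ^ (k + Suc n))" using e0_pos by simp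
  moreover have "G k u v (3 * t - 1) \<in> M" if "1/3 < t" "t \<le> 2/3"
    using pathin_in_mspace[OF pathin_bridge[OF Suc.prems(1)]] that by auto
  ultimately show ?case
    using Suc.IH[of "Suc k" u "G k u v 0" "3 * t"] Suc.IH[of "Suc k" "G k u v 1" v "3 * t - 2"] adm Suc.prems(2)
    by (subst (1 2) fill_gaps.simps(2)) auto
qed

lemma fill_gaps_dist:
  assumes "admissible k u v" "t \<in> {0..1}"
  shows "d (fill_gaps G n k u v t) (fill_gaps G (n + j) k u v t) \<le> 4 * (e0 / 2 ^ (k + n)) - 4 * (e0 / 2 ^ (k + n + j))"
proof (induction j)
  case 0
  then show ?case using fill_gaps_in_mspace[OF assms] by simp
next
  case (Suc j)
  have "d (fill_gaps G n k u v t) (fill_gaps G (n + Suc j) k u v t)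
     \<le> d (fill_gaps G n k u v t) (fill_gaps G (n + j) k u v t)
       + d (fill_gaps G (n + j) k u v t) (fill_gaps G (Suc (n + j)) k u v t)"
    unfolding add_Suc_right by (intro triangle fill_gaps_in_mspace[OF assms])
  also have "\<dots> \<le> (4 * (e0 / 2 ^ (k + n)) - 4 * (e0 / 2 ^ (k + n + j))) + 2 * (e0 / 2 ^ (k + n + j))"
    using Suc.IH fill_gaps_Suc_dist[OF assms, of "n + j"] commute by (simp add: add.assoc)
  also have "\<dots> = 4 * (e0 / 2 ^ (k + n)) - 4 * (e0 / 2 ^ (k + n + Suc j))"
    by (simp add: field_simps)
  finally show ?case .
qed

lemma fill_gaps_local_oscillation_less:
  "admissible k u v \<Longrightarrow> local_oscillation_less d {0..1} (fill_gaps G n k u v) (2 * (e0 / 2 ^ (k + n)))"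
proof (induction n arbitrary: k u v)
  case 0
  have "d u v < 2 * (e0 / 2 ^ k)" "d v u < 2 * (e0 / 2 ^ k)" "0 < 2 * (e0 / 2 ^ k)"
    using admissible_dist[OF 0] commute e0_pos by auto
  then have "d (fill_gaps G 0 k u v s) (fill_gaps G 0 k u v t) < 2 * (e0 / 2 ^ k)" for s t
    using admissible_in_mspace[OF 0] by auto
  then show ?case unfolding local_oscillation_less_def by (auto intro: zero_less_one)
next
  case (Suc n)
  note adm = bridge_admissible[OF Suc.prems]
  define e where "e = 2 * (e0 / 2 ^ (k + Suc n))"
  have IH: "local_oscillation_less d {0..1} (fill_gaps G n (Suc k) u' v') e" if "admissible (Suc k) u' v'" for u' v'
    using Suc.IH[OF that] by (simp add: e_def)
  have "local_oscillation_less d {0/3..(0+1)/3} (\<lambda>s. fill_gaps G n (Suc k) u (G k u v 0) (3 * s - 0)) e"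
    by (rule local_oscillation_less_rescale[OF IH]) (use adm in auto)
  then have left: "local_oscillation_less d {0..1/3} (fill_gaps G (Suc n) k u v) e"
    by (subst local_oscillation_less_cong[where g = "\<lambda>s. fill_gaps G n (Suc k) u (G k u v 0) (3 * s)"]) auto
  have "e > 0" using e0_pos by (simp add: e_def)
  then have "local_oscillation_less d {1/3..(1+1)/3} (\<lambda>s. G k u v (3 * s - 1)) e"
    by (rule local_oscillation_less_rescale[OF pathin_local_oscillation_less[OF pathin_bridge[OF Suc.prems]]]) auto
  then have middle: "local_oscillation_less d {1/3..2/3} (fill_gaps G (Suc n) k u v) e"
    by (subst local_oscillation_less_cong[OF fill_gaps_Suc_middle]) auto
  have "local_oscillation_less d {2/3..(2+1)/3} (\<lambda>s. fill_gaps G n (Suc k) (G k u v 1) v (3 * s - 2)) e"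
    by (rule local_oscillation_less_rescale[OF IH]) (use adm in auto)
  then have right: "local_oscillation_less d {2/3..1} (fill_gaps G (Suc n) k u v) e"
    by (subst local_oscillation_less_cong[OF fill_gaps_Suc_right]) auto
  have "local_oscillation_less d {0..1} (fill_gaps G (Suc n) k u v) e"
    using local_oscillation_less_join[OF left local_oscillation_less_join[OF middle right]] by simp
  then show ?case by (simp add: e_def del: fill_gaps.simps)
qed

lemma fill_gaps_limit:
  assumes "mcomplete" and adm: "admissible 0 x y"
  obtains L where "\<And>t. t \<in> {0..1} \<Longrightarrow> limitin mtopology (\<lambda>n. fill_gaps G n 0 x y t) (L t) sequentially"
    and "\<And>t n. t \<in> {0..1} \<Longrightarrow> d (fill_gaps G n 0 x y t) (L t) \<le> 4 * (e0 / 2 ^ n)"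
proof -
  have dist_le: "d (fill_gaps G n 0 x y t) (fill_gaps G m 0 x y t) \<le> 4 * (e0 / 2 ^ n)"
    if "t \<in> {0..1}" "n \<le> m" for n m t
  proof -
    obtain j where "m = n + j" using \<open>n \<le> m\<close> le_Suc_ex by blast
    moreover have "0 \<le> 4 * e0 / 2 ^ (n + j)" using e0_pos by simp
    ultimately show ?thesis using fill_gaps_dist[OF adm that(1), of n j] by simp
  qed
  have "MCauchy (\<lambda>n. fill_gaps G n 0 x y t)" if t: "t \<in> {0..1}" for t
    unfolding MCauchy_def
  proof (intro conjI allI impI)
    show "range (\<lambda>n. fill_gaps G n 0 x y t) \<subseteq> M" using fill_gaps_in_mspace[OF adm t] by auto
    fix \<epsilon> :: real assume "\<epsilon> > 0"
    then obtain N where N: "4 * e0 / 2 ^ N < \<epsilon>" using exists_halving_less by blast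
    have "d (fill_gaps G n 0 x y t) (fill_gaps G n' 0 x y t) < \<epsilon>" if "N \<le> n" "N \<le> n'" for n n'
    proof -
      have "e0 / 2 ^ p \<le> e0 / 2 ^ N" if "N \<le> p" for p
        using e0_pos that by (simp add: frac_le)
      then show ?thesis
        using dist_le[OF t, of n n'] dist_le[OF t, of n' n] commute[of "fill_gaps G n 0 x y t"] that N
        by (cases "n \<le> n'") (fastforce)+
    qed
    then show "\<exists>N. \<forall>n n'. N \<le> n \<longrightarrow> N \<le> n' \<longrightarrow> d (fill_gaps G n 0 x y t) (fill_gaps G n' 0 x y t) < \<epsilon>"
      by blast
  qed
  then have "\<forall>t\<in>{0..1}. \<exists>l. limitin mtopology (\<lambda>n. fill_gaps G n 0 x y t) l sequentially"
    using \<open>mcomplete\<close> unfolding mcomplete_def by blast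
  then obtain L where lim: "\<And>t. t \<in> {0..1} \<Longrightarrow> limitin mtopology (\<lambda>n. fill_gaps G n 0 x y t) (L t) sequentially"
    by metis
  have "d (fill_gaps G n 0 x y t) (L t) \<le> 4 * (e0 / 2 ^ n)" if "t \<in> {0..1}" for t n
    by (rule limitin_mdist_le[OF lim[OF that] fill_gaps_in_mspace[OF adm that]])
      (intro eventually_sequentiallyI[of n] dist_le[OF that])
  with lim show thesis using that by blast
qed

lemma pathin_fill_gaps_limit:
  assumes "mcomplete" and adm: "admissible 0 x y"
  obtains g where "pathin mtopology g" "g 0 = x" "g 1 = y" "\<forall>t\<in>{0..1}. d x (g t) \<le> d x y + 4 * e0"
proof -
  obtain L where lim: "\<And>t. t \<in> {0..1} \<Longrightarrow> limitin mtopology (\<lambda>n. fill_gaps G n 0 x y t) (L t) sequentially"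
    and close: "\<And>t n. t \<in> {0..1} \<Longrightarrow> d (fill_gaps G n 0 x y t) (L t) \<le> 4 * (e0 / 2 ^ n)"
    using fill_gaps_limit[OF assms] by blast
  have LM: "L ` {0..1} \<subseteq> M" using lim limitin_mspace by blast
  have "continuous_map (top_of_set {0..1}) mtopology L"
  proof (rule continuous_map_uniform_limit_oscillation[OF LM])
    fix \<epsilon> :: real assume "\<epsilon> > 0"
    then obtain n where n: "4 * e0 / 2 ^ n < \<epsilon>" using exists_halving_less by blast
    have "2 * (e0 / 2 ^ (0 + n)) \<le> \<epsilon>"
      using n e0_pos divide_right_mono[of "2 * e0" "4 * e0" "2 ^ n"] by simp
    then have "local_oscillation_less d {0..1} (fill_gaps G n 0 x y) \<epsilon>"
      using fill_gaps_local_oscillation_less[OF adm, of n] local_oscillation_less_mono by blast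
    moreover have "fill_gaps G n 0 x y t \<in> M \<and> d (fill_gaps G n 0 x y t) (L t) < \<epsilon>" if "t \<in> {0..1}" for t
      using fill_gaps_in_mspace[OF adm that] close[OF that, of n] n by simp
    ultimately show "\<exists>h. local_oscillation_less d {0..1} h \<epsilon> \<and> (\<forall>t\<in>{0..1}. h t \<in> M \<and> d (h t) (L t) < \<epsilon>)"
      by blast
  qed
  moreover have "L 0 = x" "L 1 = y"
    using lim[of 0] lim[of 1] admissible_in_mspace[OF adm]
      limitin_metric_unique[of "\<lambda>n. x" _ sequentially x] limitin_metric_unique[of "\<lambda>n. y" _ sequentially y]
    by auto
  moreover have "d x (L t) \<le> d x y + 4 * e0" if "t \<in> {0..1}" for t
  proof -
    have "d x (L t) \<le> d x (fill_gaps G 0 0 x y t) + d (fill_gaps G 0 0 x y t) (L t)"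
      using triangle admissible_in_mspace[OF adm] fill_gaps_in_mspace[OF adm that] LM that by blast
    then show ?thesis
      using close[OF that, of 0] admissible_in_mspace[OF adm] nonneg[of x y]
      by (auto split: if_splits simp del: nonneg)
  qed
  ultimately show thesis using that unfolding pathin_def by blast
qed

end

lemma joined_by_arc_in_mono: "joined_by_arc_in X S A B \<Longrightarrow> S \<subseteq> T \<Longrightarrow> joined_by_arc_in X T A B"
  unfolding joined_by_arc_in_def by blast

lemma (in Metric_space) locally_almost_arcwise_connected_mball:
  assumes "locally_almost_arcwise_connected mtopology" "x \<in> M" "e > 0"
  shows "\<exists>\<delta>>0. \<delta> \<le> e \<and> (\<forall>A B. openin mtopology A \<and> A \<noteq> {} \<and> A \<subseteq> mball x \<delta> \<and>
      openin mtopology B \<and> B \<noteq> {} \<and> B \<subseteq> mball x \<delta> \<longrightarrow> joined_by_arc_in mtopology (mball x e) A B)"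
proof -
  \<comment> \<open>a closed ball is its own closure, so arcs in the closure of \<open>V\<close> stay inside the \<open>e\<close>-ball\<close>
  define V where "V = mcball x (e/2)"
  have "mtopology closure_of V = V"
    by (simp add: V_def closure_of_eq)
  then have "mtopology closure_of V \<subseteq> mball x e"
    using assms(3) by (auto simp: V_def)
  have "nbhd_of mtopology x V"
    unfolding nbhd_of_def V_def using assms(2,3) mball_subset_mcball
    by (intro conjI exI[of _ "mball x (e/2)"]) auto
  moreover have "locally_almost_arcwise_connected_at mtopology x"
    using assms(1,2) unfolding locally_almost_arcwise_connected_def by simp
  ultimately obtain U where U: "nbhd_of mtopology x U"
    and joined: "\<forall>A B. openin (subtopology mtopology U) A \<and> A \<noteq> {} \<and>
        openin (subtopology mtopology U) B \<and> B \<noteq> {} \<longrightarrow> joined_by_arc_in mtopology (mtopology closure_of V) A B"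
    unfolding locally_almost_arcwise_connected_at_def by blast
  obtain W where W: "openin mtopology W" "x \<in> W" "W \<subseteq> U"
    using U unfolding nbhd_of_def by blast
  obtain r where "r > 0" and r: "mball x r \<subseteq> W"
    using W(1,2) unfolding openin_mtopology by blast
  have "joined_by_arc_in mtopology (mball x e) A B"
    if "openin mtopology A" "A \<noteq> {}" "A \<subseteq> mball x (min r e)"
      "openin mtopology B" "B \<noteq> {}" "B \<subseteq> mball x (min r e)" for A B
  proof -
    have "mball x (min r e) \<subseteq> U" using r W(3) by auto
    then have "A \<subseteq> U" "B \<subseteq> U" using that(3,6) by blast+
    then have "openin (subtopology mtopology U) A" "openin (subtopology mtopology U) B"
      using that(1,4) by (simp_all add: subset_openin_subtopology)
    then have "joined_by_arc_in mtopology (mtopology closure_of V) A B"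
      using joined that(2,5) by blast
    then show ?thesis
      using joined_by_arc_in_mono \<open>mtopology closure_of V \<subseteq> mball x e\<close> by blast
  qed
  then show ?thesis using \<open>r > 0\<close> assms(3) by (intro exI[of _ "min r e"]) simp
qed

locale joining_radius = Metric_space M d for M :: "'a set" and d +
  fixes \<delta> :: "'a \<Rightarrow> real \<Rightarrow> real"
  assumes radius_pos: "c \<in> M \<Longrightarrow> e > 0 \<Longrightarrow> 0 < \<delta> c e"
    and radius_le: "c \<in> M \<Longrightarrow> e > 0 \<Longrightarrow> \<delta> c e \<le> e"
    and joined_in_mball: "c \<in> M \<Longrightarrow> e > 0 \<Longrightarrow> openin mtopology A \<Longrightarrow> A \<noteq> {} \<Longrightarrow> A \<subseteq> mball c (\<delta> c e) \<Longrightarrow>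
        openin mtopology B \<Longrightarrow> B \<noteq> {} \<Longrightarrow> B \<subseteq> mball c (\<delta> c e) \<Longrightarrow> joined_by_arc_in mtopology (mball c e) A B"
begin

definition near :: "real \<Rightarrow> 'a \<Rightarrow> 'a \<Rightarrow> bool" where
  "near e u v \<longleftrightarrow> (\<exists>c. u \<in> mball c (\<delta> c e) \<and> v \<in> mball c (\<delta> c e))"

lemma near_centre: "c \<in> M \<Longrightarrow> e > 0 \<Longrightarrow> v \<in> mball c r \<Longrightarrow> r \<le> \<delta> c e \<Longrightarrow> near e c v"
  unfolding near_def using radius_pos by (intro exI[of _ c]) auto

lemma near_dist: "near e u v \<Longrightarrow> e > 0 \<Longrightarrow> u \<in> M \<and> v \<in> M \<and> d u v < 2 * e"
  unfolding near_def using radius_le triangle'' by (smt (verit, best) in_mball)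

lemma bridge_exists:
  assumes near: "near E u v" and "E > 0" "E' > 0"
  shows "\<exists>g. pathin mtopology g \<and> (\<forall>t\<in>{0..1}. d u (g t) < 2 * E \<and> d v (g t) < 2 * E) \<and>
    near E' u (g 0) \<and> near E' (g 1) v"
proof -
  obtain c where c: "u \<in> mball c (\<delta> c E)" "v \<in> mball c (\<delta> c E)"
    using near unfolding near_def by blast
  then have cM: "c \<in> M" "u \<in> M" "v \<in> M" by auto
  \<comment> \<open>the \<open>r\<close>-balls at \<open>u\<close> and \<open>v\<close> lie in the \<open>\<delta>\<close>-ball at \<open>c\<close>, so they can be joined,
    and in the next-scale \<open>\<delta>\<close>-balls at \<open>u\<close> and \<open>v\<close>, so the two remaining gaps are near\<close>
  define r where "r = min (min (\<delta> c E - d c u) (\<delta> c E - d c v)) (min (\<delta> u E') (\<delta> v E'))"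
  have "r > 0" using c radius_pos[OF cM(2) \<open>E' > 0\<close>] radius_pos[OF cM(3) \<open>E' > 0\<close>] by (auto simp: r_def)
  have "mball w r \<subseteq> mball c (\<delta> c E)" if "w \<in> {u, v}" for w
    using that cM triangle[of c w] by (fastforce simp: r_def)
  moreover have "mball w r \<noteq> {}" if "w \<in> {u, v}" for w
    using that cM \<open>r > 0\<close> by (auto dest: centre_in_mball_iff[THEN iffD2])
  ultimately obtain g where g: "pathin mtopology g" "g ` {0..1} \<subseteq> mball c E" "g 0 \<in> mball u r" "g 1 \<in> mball v r"
    using joined_in_mball[OF cM(1) \<open>E > 0\<close>, of "mball u r" "mball v r"] unfolding joined_by_arc_in_def by auto
  have "d w (g t) < 2 * E" if "w \<in> {u, v}" "t \<in> {0..1}" for w t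
  proof -
    have "g t \<in> mball c E" using g(2) that(2) by blast
    moreover have "d w (g t) \<le> d c w + d c (g t)" using triangle'' cM that calculation by auto
    ultimately show ?thesis using c that radius_le[OF cM(1) \<open>E > 0\<close>] by auto
  qed
  moreover have "near E' u (g 0)" "near E' (g 1) v"
  proof -
    have "r \<le> \<delta> u E'" "r \<le> \<delta> v E'" by (simp_all add: r_def)
    then show "near E' u (g 0)" "near E' (g 1) v"
      using near_centre[OF cM(2) \<open>E' > 0\<close> g(3)] near_centre[OF cM(3) \<open>E' > 0\<close> g(4)]
      unfolding near_def by blast+
  qed
  ultimately show ?thesis
    using g(1) by blast
qed

lemma short_paths_from_centre:
  assumes "mcomplete" and x: "x \<in> M" and "\<epsilon> > 0"
  shows "\<exists>\<rho>>0. \<forall>y\<in>mball x \<rho>. \<exists>g. pathin mtopology g \<and> g 0 = x \<and> g 1 = y \<and> g ` {0..1} \<subseteq> mball x \<epsilon>"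
proof -
  \<comment> \<open>the limit path stays within \<open>d x y + 4 * e0 < 5 * e0\<close> of \<open>x\<close>\<close>
  define e0 where "e0 = \<epsilon> / 8"
  have "e0 > 0" using \<open>\<epsilon> > 0\<close> by (simp add: e0_def)
  define G where "G k u v = (SOME g. pathin mtopology g \<and>
      (\<forall>t\<in>{0..1}. d u (g t) < 2 * (e0 / 2 ^ k) \<and> d v (g t) < 2 * (e0 / 2 ^ k)) \<and>
      near (e0 / 2 ^ Suc k) u (g 0) \<and> near (e0 / 2 ^ Suc k) (g 1) v)" for k u v
  have G: "pathin mtopology (G k u v) \<and>
      (\<forall>t\<in>{0..1}. d u (G k u v t) < 2 * (e0 / 2 ^ k) \<and> d v (G k u v t) < 2 * (e0 / 2 ^ k)) \<and>
      near (e0 / 2 ^ Suc k) u (G k u v 0) \<and> near (e0 / 2 ^ Suc k) (G k u v 1) v"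
    if "near (e0 / 2 ^ k) u v" for k u v
  proof -
    have "\<exists>g. pathin mtopology g \<and>
        (\<forall>t\<in>{0..1}. d u (g t) < 2 * (e0 / 2 ^ k) \<and> d v (g t) < 2 * (e0 / 2 ^ k)) \<and>
        near (e0 / 2 ^ Suc k) u (g 0) \<and> near (e0 / 2 ^ Suc k) (g 1) v"
      by (rule bridge_exists[OF that]) (use \<open>e0 > 0\<close> in simp_all)
    then show ?thesis unfolding G_def by (rule someI_ex)
  qed
  interpret gap_filling M d "\<lambda>k. near (e0 / 2 ^ k)" G e0
  proof
    fix k u v
    assume near: "near (e0 / 2 ^ k) u v"
    then show "u \<in> M \<and> v \<in> M" "d u v < 2 * (e0 / 2 ^ k)"
      using near_dist[OF near] \<open>e0 > 0\<close> by simp_all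
    show "pathin mtopology (G k u v)"
      "near (e0 / 2 ^ Suc k) u (G k u v 0) \<and> near (e0 / 2 ^ Suc k) (G k u v 1) v"
      using G[OF near] by blast+
    fix t :: real assume "t \<in> {0..1}"
    then show "d u (G k u v t) < 2 * (e0 / 2 ^ k) \<and> d v (G k u v t) < 2 * (e0 / 2 ^ k)"
      using G[OF near] by blast
  qed (fact \<open>e0 > 0\<close>)
  have "\<exists>g. pathin mtopology g \<and> g 0 = x \<and> g 1 = y \<and> g ` {0..1} \<subseteq> mball x \<epsilon>"
    if y: "y \<in> mball x (\<delta> x e0)" for y
  proof -
    have "near e0 x y" using near_centre[OF x \<open>e0 > 0\<close> y order_refl] .
    then obtain g where g: "pathin mtopology g" "g 0 = x" "g 1 = y" "\<forall>t\<in>{0..1}. d x (g t) \<le> d x y + 4 * e0"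
      using pathin_fill_gaps_limit[OF \<open>mcomplete\<close>] by auto
    have "d x y < e0" using y radius_le[OF x \<open>e0 > 0\<close>] by simp
    have "g t \<in> mball x \<epsilon>" if "t \<in> {0..1}" for t
    proof -
      have "d x (g t) \<le> d x y + 4 * e0" using g(4) that by blast
      then have "d x (g t) < \<epsilon>" using \<open>d x y < e0\<close> \<open>e0 > 0\<close> unfolding e0_def by linarith
      then show ?thesis using x pathin_in_mspace[OF g(1) that] by simp
    qed
    with g show ?thesis by blast
  qed
  then show ?thesis using radius_pos[OF x \<open>e0 > 0\<close>] by blast
qed

end

lemma (in Metric_space) locally_path_connected_space_if_locally_almost_arcwise_connected:
  assumes "mcomplete" "locally_almost_arcwise_connected mtopology"
  shows "locally_path_connected_space mtopology"
proof -
  obtain \<delta> where \<delta>: "\<And>c e. c \<in> M \<Longrightarrow> e > 0 \<Longrightarrow> \<delta> c e > 0 \<and> \<delta> c e \<le> e \<and>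
      (\<forall>A B. openin mtopology A \<and> A \<noteq> {} \<and> A \<subseteq> mball c (\<delta> c e) \<and>
        openin mtopology B \<and> B \<noteq> {} \<and> B \<subseteq> mball c (\<delta> c e) \<longrightarrow> joined_by_arc_in mtopology (mball c e) A B)"
    using locally_almost_arcwise_connected_mball[OF assms(2)] by metis
  interpret joining_radius M d \<delta>
    by unfold_locales (use \<delta> in blast)+
  show ?thesis
    unfolding locally_path_connected_space_im_kleinen
  proof (intro allI impI)
    fix V x assume "openin mtopology V \<and> x \<in> V"
    then obtain \<epsilon> where "\<epsilon> > 0" "mball x \<epsilon> \<subseteq> V" and x: "x \<in> M"
      unfolding openin_mtopology by blast
    then obtain \<rho> where "\<rho> > 0" and short:
        "\<forall>y\<in>mball x \<rho>. \<exists>g. pathin mtopology g \<and> g 0 = x \<and> g 1 = y \<and> g ` {0..1} \<subseteq> mball x \<epsilon>"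
      using short_paths_from_centre[OF assms(1)] by blast
    have "\<exists>C. path_connectedin mtopology C \<and> C \<subseteq> V \<and> x \<in> C \<and> y \<in> C" if "y \<in> mball x (min \<rho> \<epsilon>)" for y
    proof -
      have "y \<in> mball x \<rho>" using that by simp
      then obtain g where g: "pathin mtopology g" "g 0 = x" "g 1 = y" "g ` {0..1} \<subseteq> mball x \<epsilon>"
        using short by blast
      then have "x \<in> g ` {0..1}" "y \<in> g ` {0..1}"
        by (metis atLeastAtMost_iff image_eqI order_refl zero_le_one)+
      then show ?thesis
        using g \<open>mball x \<epsilon> \<subseteq> V\<close> path_connectedin_path_image by blast
    qed
    then show "\<exists>U. openin mtopology U \<and> x \<in> U \<and> U \<subseteq> V \<and>
        (\<forall>y\<in>U. \<exists>C. path_connectedin mtopology C \<and> C \<subseteq> V \<and> x \<in> C \<and> y \<in> C)"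
      using x \<open>\<rho> > 0\<close> \<open>\<epsilon> > 0\<close> \<open>mball x \<epsilon> \<subseteq> V\<close>
      by (intro exI[of _ "mball x (min \<rho> \<epsilon>)"]) auto
  qed
qed

lemma path_connected_space_if_almost_arcwise_connected:
  assumes "locally_path_connected_space X" "almost_arcwise_connected X"
  shows "path_connected_space X"
  unfolding path_connected_space_iff_path_component
proof (intro ballI)
  fix x y assume "x \<in> topspace X" "y \<in> topspace X"
  then have "x \<in> Collect (path_component_of X x)" "y \<in> Collect (path_component_of X y)"
    by (simp_all add: path_component_of_refl)
  moreover have "openin X (Collect (path_component_of X z))" for z
    using openin_path_component_of_locally_path_connected_space[OF assms(1)] by simp
  ultimately
  obtain g where "pathin X g" "path_component_of X x (g 0)" "path_component_of X y (g 1)"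
    using assms(2) unfolding almost_arcwise_connected_def joined_by_arc_in_def by blast
  then show "path_component_of X x y"
    by (meson path_component_of_def path_component_of_sym path_component_of_trans)
qed

theorem mainTheorem13:
  fixes X :: "'a topology"
  assumes "completely_metrizable_space X"
    and "almost_arcwise_connected X"
    and "locally_almost_arcwise_connected X"
  shows "path_connected_space X \<and> locally_path_connected_space X"
proof -
  obtain M d where "Metric_space M d" "Metric_space.mcomplete M d" "X = Metric_space.mtopology M d"
    using assms(1) unfolding completely_metrizable_space_def by blast
  then have "locally_path_connected_space X"
    using Metric_space.locally_path_connected_space_if_locally_almost_arcwise_connected assms(3) by blast
  then show ?thesis
    using path_connected_space_if_almost_arcwise_connected assms(2) by blast
qed

end
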